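(* Let $(B_i)_{i\in Q_0}\in\bigoplus_i\mathrm{Herm}(V_i)$ and let $a_{i,1}\leq\ldots\leq a_{i,d_i}$ be the eigenvalues of $B_i$. Set $\Theta_{i,k}=a_{i,k}-a_{i,k+1}$ for $i\in Q_0$, $1\le k<d_i$, and $\Theta_{i,d_i}=a_{i,d_i}$. Then $(B_i)_i$ belongs to the image of $\mu_Q$ if and only if the tuple of scalar operators $(\Theta_{i,k}\cdot\mathrm{id}_{V_{i,k}})_{i,k}$ belongs to the image of $\mu_{Q_{\mathbf d}}:R_{\hat{\mathbf d}}(Q_{\mathbf d})\to\bigoplus_{i,k}\mathrm{Herm}(V_{i,k})$.
   Context: $Q$ is a finite quiver with vertex set $Q_0$ and arrows $\alpha:i\to j$; $\mathbf d\in\mathbb NQ_0$. For any quiver $\Gamma$ and complex vector spaces $W_v$ ($v\in\Gamma_0$) with Hermitian inner products, $R(\Gamma)=\bigoplus_{\alpha:v\to w}\mathrm{Hom}(W_v,W_w)$ and $\mu_\Gamma((f_\alpha))_v=\sum_{\alpha:w\to v}f_\alpha f_\alpha^*-\sum_{\alpha:v\to w}f_\alpha^*f_\alpha\in\mathrm{Herm}(W_v)$. For $Q$ we use spaces $V_i$ of dimension $d_i$, giving $\mu_Q$ on $R_{\mathbf d}(Q)$. The leg-extended quiver $Q_{\mathbf d}$ has vertices $(i,k)$ for $i\in Q_0$, $1\leq k\leq d_i$, an arrow $\alpha:(i,d_i)\to(j,d_j)$ for each arrow $\alpha:i\to j$ of $Q$ (with $d_i,d_j\geq1$), and arrows $\beta_{i,k}:(i,k)\to(i,k+1)$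 for $i\in Q_0$, $1\le k<d_i$. Its dimension vector $\hat{\mathbf d}$ is $\hat d_{i,k}=k$. For $Q_{\mathbf d}$ we use Hermitian spaces $V_{i,k}$ of dimension $k$, with $V_{i,d_i}=V_i$ (same Hermitian form), giving $\mu_{Q_{\mathbf d}}$ on $R_{\hat{\mathbf d}}(Q_{\mathbf d})$. *)

theory Defs
  imports Complex_Main "Jordan_Normal_Form.Char_Poly"
begin

text \<open>Hermitian spaces of dimension n are modelled as C^n with the standard
  Hermitian inner product; linear maps are complex matrices, and the adjoint
  of a map is the conjugate transpose.\<close>

definition cadj :: "complex mat \<Rightarrow> complex mat" where
  "cadj A = mat (dim_col A) (dim_row A) (\<lambda>(p,q). cnj (A $$ (q,p)))"

definition herm :: "nat \<Rightarrow> complex mat \<Rightarrow> bool" where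
  "herm n B \<longleftrightarrow> B \<in> carrier_mat n n \<and> cadj B = B"

text \<open>A quiver: vertex set V, arrow set E, source s, target t; dimension vector nd.
  R(Gamma) = representations: an n_t x n_s matrix for each arrow.\<close>

definition rep_space ::
  "'e set \<Rightarrow> ('e \<Rightarrow> 'v) \<Rightarrow> ('e \<Rightarrow> 'v) \<Rightarrow> ('v \<Rightarrow> nat) \<Rightarrow> ('e \<Rightarrow> complex mat) set" where
  "rep_space E s t nd = {f. \<forall>\<alpha>\<in>E. f \<alpha> \<in> carrier_mat (nd (t \<alpha>)) (nd (s \<alpha>))}"

definition moment ::
  "'e set \<Rightarrow> ('e \<Rightarrow> 'v) \<Rightarrow> ('e \<Rightarrow> 'v) \<Rightarrow> ('v \<Rightarrow> nat) \<Rightarrow> ('e \<Rightarrow> complex mat) \<Rightarrow> 'v \<Rightarrow> complex mat" where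
  "moment E s t nd f v = mat (nd v) (nd v) (\<lambda>pq.
      (\<Sum>\<alpha>\<in>{\<alpha>\<in>E. t \<alpha> = v}. (f \<alpha> * cadj (f \<alpha>)) $$ pq)
    - (\<Sum>\<alpha>\<in>{\<alpha>\<in>E. s \<alpha> = v}. (cadj (f \<alpha>) * f \<alpha>) $$ pq))"

definition in_moment_image ::
  "'v set \<Rightarrow> 'e set \<Rightarrow> ('e \<Rightarrow> 'v) \<Rightarrow> ('e \<Rightarrow> 'v) \<Rightarrow> ('v \<Rightarrow> nat) \<Rightarrow> ('v \<Rightarrow> complex mat) \<Rightarrow> bool" where
  "in_moment_image V E s t nd B \<longleftrightarrow>
     (\<exists>f\<in>rep_space E s t nd. \<forall>v\<in>V. moment E s t nd f v = B v)"

text \<open>Leg-extended quiver Q_d: vertices (i,k), 1 \<le> k \<le> d i; arrows are the original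
  arrows (between (i,d_i) and (j,d_j), when d_i, d_j \<ge> 1) and legs beta_{i,k}:(i,k)\<rightarrow>(i,k+1).\<close>

datatype ('v,'e) leg_arrow = Orig 'e | Leg 'v nat

definition leg_vertices :: "'v set \<Rightarrow> ('v \<Rightarrow> nat) \<Rightarrow> ('v \<times> nat) set" where
  "leg_vertices V d = {(i,k). i \<in> V \<and> 1 \<le> k \<and> k \<le> d i}"

definition leg_arrows ::
  "'v set \<Rightarrow> 'e set \<Rightarrow> ('e \<Rightarrow> 'v) \<Rightarrow> ('e \<Rightarrow> 'v) \<Rightarrow> ('v \<Rightarrow> nat) \<Rightarrow> ('v,'e) leg_arrow set" where
  "leg_arrows V E s t d =
     {Orig \<alpha> | \<alpha>. \<alpha> \<in> E \<and> 1 \<le> d (s \<alpha>) \<and> 1 \<le> d (t \<alpha>)}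
   \<union> {Leg i k | i k. i \<in> V \<and> 1 \<le> k \<and> k < d i}"

fun leg_src :: "('e \<Rightarrow> 'v) \<Rightarrow> ('v \<Rightarrow> nat) \<Rightarrow> ('v,'e) leg_arrow \<Rightarrow> 'v \<times> nat" where
  "leg_src s d (Orig \<alpha>) = (s \<alpha>, d (s \<alpha>))"
| "leg_src s d (Leg i k) = (i, k)"

fun leg_tgt :: "('e \<Rightarrow> 'v) \<Rightarrow> ('v \<Rightarrow> nat) \<Rightarrow> ('v,'e) leg_arrow \<Rightarrow> 'v \<times> nat" where
  "leg_tgt t d (Orig \<alpha>) = (t \<alpha>, d (t \<alpha>))"
| "leg_tgt t d (Leg i k) = (i, Suc k)"

definition leg_dim :: "'v \<times> nat \<Rightarrow> nat" where
  "leg_dim ik = snd ik"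

definition sorted_eigenvalues :: "complex mat \<Rightarrow> real list \<Rightarrow> bool" where
  "sorted_eigenvalues B a \<longleftrightarrow> sorted a \<and> length a = dim_row B \<and>
     char_poly B = (\<Prod>x\<leftarrow>a. [:- complex_of_real x, 1:])"

text \<open>Theta_{i,k} (k 1-based, list a 0-based).\<close>

definition Theta :: "real list \<Rightarrow> nat \<Rightarrow> nat \<Rightarrow> real" where
  "Theta a n k = (if k < n then a ! (k - 1) - a ! k else a ! (n - 1))"

end

theory Submission
  imports Defs "Jordan_Normal_Form.Schur_Decomposition"
begin

text \<open>The moment map is equivariant under unitary base change at the vertices, so the image of
  \<open>\<mu>\<^sub>Q\<close> is stable under conjugating each \<open>B\<^sub>i\<close> by a unitary, and by the spectral theorem we
  may assume \<open>B\<^sub>i = diag(a\<^sub>i)\<close>.  If \<open>\<mu>\<^sub>Q(f) = diag(a)\<close>, extend \<open>f\<close> by the legs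
  \<open>\<beta>\<^sub>i\<^sub>,\<^sub>k : \<complex>\<^sup>k \<rightarrow> \<complex>\<^sup>k\<^sup>+\<^sup>1\<close>, \<open>e\<^sub>p \<mapsto> \<surd>(a\<^sub>i\<^sub>,\<^sub>k\<^sub>+\<^sub>1 - a\<^sub>i\<^sub>,\<^sub>p) e\<^sub>p\<close>: then \<open>\<beta>\<beta>\<^sup>*\<close> and \<open>\<beta>\<^sup>*\<beta>\<close> are
  diagonal, and the moment at \<open>(i,k)\<close> comes out as \<open>\<Theta>\<^sub>i\<^sub>,\<^sub>k \<cdot> id\<close>.
  Conversely, if the moments at the \<open>(i,k)\<close> are \<open>\<Theta>\<^sub>i\<^sub>,\<^sub>k \<cdot> id\<close>, then \<open>\<beta>\<^sub>k\<^sup>*\<beta>\<^sub>k\<close> is a scalar shift of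
  \<open>\<beta>\<^sub>k\<^sub>-\<^sub>1\<beta>\<^sub>k\<^sub>-\<^sub>1\<^sup>*\<close>, while \<open>\<beta>\<^sub>k\<beta>\<^sub>k\<^sup>*\<close> has the spectrum of \<open>\<beta>\<^sub>k\<^sup>*\<beta>\<^sub>k\<close> together with one extra \<open>0\<close>
  (Sylvester's determinant identity).  By induction \<open>\<beta>\<^sub>k\<beta>\<^sub>k\<^sup>*\<close> has the eigenvalues
  \<open>a\<^sub>i\<^sub>,\<^sub>k\<^sub>+\<^sub>1 - a\<^sub>i\<^sub>,\<^sub>p\<close>, \<open>p \<le> k + 1\<close>, so at the top vertex
  \<open>\<mu>\<^sub>Q(f)\<^sub>i = a\<^sub>i\<^sub>,\<^sub>d\<^sub>i \<cdot> id - \<beta>\<^sub>d\<^sub>i\<^sub>-\<^sub>1\<beta>\<^sub>d\<^sub>i\<^sub>-\<^sub>1\<^sup>*\<close> has the eigenvalues \<open>a\<^sub>i\<close> and is unitarily similar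
  to \<open>B\<^sub>i\<close>.\<close>

section \<open>Conjugate transpose and unitary similarity\<close>

lemma cadj_dim [simp]: "dim_row (cadj A) = dim_col A" "dim_col (cadj A) = dim_row A"
  unfolding cadj_def by simp_all

lemma cadj_carrier_mat [simp]: "A \<in> carrier_mat m n \<Longrightarrow> cadj A \<in> carrier_mat n m"
  unfolding carrier_mat_def by simp

lemma index_cadj [simp]:
  "i < dim_col A \<Longrightarrow> j < dim_row A \<Longrightarrow> cadj A $$ (i,j) = cnj (A $$ (j,i))"
  unfolding cadj_def by simp

lemma cadj_cadj [simp]: "cadj (cadj A) = A"
  by (rule eq_matI) simp_all

lemma cadj_one [simp]: "cadj (1\<^sub>m n) = 1\<^sub>m n"
  by (rule eq_matI) simp_all

lemma cadj_zero [simp]: "cadj (0\<^sub>m m n) = 0\<^sub>m n m"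
  by (rule eq_matI) simp_all

lemma cadj_mult:
  assumes "A \<in> carrier_mat m n" "B \<in> carrier_mat n p"
  shows "cadj (A * B) = cadj B * cadj A"
  using assms by (intro eq_matI) (auto simp: scalar_prod_def mult.commute)

lemma cadj_four_block:
  assumes "A \<in> carrier_mat m1 n1" "B \<in> carrier_mat m1 n2" "C \<in> carrier_mat m2 n1" "D \<in> carrier_mat m2 n2"
  shows "cadj (four_block_mat A B C D) = four_block_mat (cadj A) (cadj C) (cadj B) (cadj D)"
  using assms by (intro eq_matI) simp_all

definition unitary :: "nat \<Rightarrow> complex mat \<Rightarrow> bool" where
  "unitary n U \<longleftrightarrow> U \<in> carrier_mat n n \<and> cadj U * U = 1\<^sub>m n"

lemma unitaryD:
  assumes "unitary n U"
  shows "U \<in> carrier_mat n n" "cadj U * U = 1\<^sub>m n" "U * cadj U = 1\<^sub>m n"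
  using assms mat_mult_left_right_inverse[of "cadj U" n U] unfolding unitary_def by auto

lemma unitary_one: "unitary n (1\<^sub>m n)"
  unfolding unitary_def by simp

definition unitarily_similar :: "complex mat \<Rightarrow> complex mat \<Rightarrow> bool" where
  "unitarily_similar A B \<longleftrightarrow> (\<exists>U. similar_mat_wit A B U (cadj U))"

lemma unitarily_similarI:
  assumes "unitary n U" "B \<in> carrier_mat n n" "A = U * B * cadj U"
  shows "unitarily_similar A B"
proof -
  note u = unitaryD[OF assms(1)]
  have "A \<in> carrier_mat n n"
    unfolding assms(3) using u(1) assms(2) by (intro mult_carrier_mat[of _ n n] cadj_carrier_mat)
  then have "similar_mat_wit A B U (cadj U)"
    using u assms(2,3) by (intro similar_mat_witI[of _ _ n]) simp_all
  then show ?thesis unfolding unitarily_similar_def by blast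
qed

lemma unitarily_similarE:
  assumes "unitarily_similar A B" "A \<in> carrier_mat n n"
  obtains U where "unitary n U" "B \<in> carrier_mat n n" "A = U * B * cadj U"
proof -
  obtain U where "similar_mat_wit A B U (cadj U)"
    using assms(1) unfolding unitarily_similar_def by blast
  note wit = similar_mat_witD2[OF assms(2) this]
  show thesis by (rule that[of U]) (use wit in \<open>auto simp add: unitary_def simp del: assoc_mult_mat\<close>)
qed

lemma unitarily_similar_carrier:
  assumes "unitarily_similar A B" "B \<in> carrier_mat n n"
  shows "A \<in> carrier_mat n n"
proof -
  obtain U where "similar_mat_wit A B U (cadj U)"
    using assms(1) unfolding unitarily_similar_def by blast
  note wit = similar_mat_witD[OF refl this]
  have "dim_row B = dim_row A" "dim_row B = n"
    using carrier_matD(1)[OF wit(5)] carrier_matD(1)[OF assms(2)] by simp_all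
  then have "dim_row A = n" by simp
  with wit(4) show ?thesis by (simp only:)
qed

lemma unitarily_similar_refl: "A \<in> carrier_mat n n \<Longrightarrow> unitarily_similar A A"
  using unitarily_similarI[OF unitary_one] by simp

lemma unitarily_similar_sym:
  assumes "unitarily_similar A B"
  shows "unitarily_similar B A"
proof -
  obtain U where "similar_mat_wit A B U (cadj U)"
    using assms unfolding unitarily_similar_def by blast
  then have "similar_mat_wit B A (cadj U) (cadj (cadj U))"
    unfolding cadj_cadj by (rule similar_mat_wit_sym)
  then show ?thesis unfolding unitarily_similar_def by blast
qed

lemma unitarily_similar_trans:
  assumes "unitarily_similar A B" "unitarily_similar B C"
  shows "unitarily_similar A C"
proof -
  obtain U V where U: "similar_mat_wit A B U (cadj U)" and V: "similar_mat_wit B C V (cadj V)"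
    using assms unfolding unitarily_similar_def by blast
  define n where "n = dim_row A"
  note u = similar_mat_witD[OF n_def U]
  note v = similar_mat_witD2[OF u(5) V]
  have "cadj V * cadj U = cadj (U * V)"
    by (rule cadj_mult[symmetric, OF u(6) v(6)])
  with similar_mat_wit_trans[OF U V] have "similar_mat_wit A C (U * V) (cadj (U * V))"
    by (simp only:)
  then show ?thesis unfolding unitarily_similar_def by blast
qed

lemma unitarily_similar_conj:
  assumes "unitary n U" "A \<in> carrier_mat n n"
  shows "unitarily_similar A (cadj U * A * U)"
proof -
  note u = unitaryD[OF assms(1)]
  have "similar_mat_wit (cadj U * A * U) A (cadj U) (cadj (cadj U))"
    using u assms(2) by (intro similar_mat_witI[of _ _ n]) (auto intro: mult_carrier_mat)
  then have "unitarily_similar (cadj U * A * U) A"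
    unfolding unitarily_similar_def by blast
  then show ?thesis by (rule unitarily_similar_sym)
qed

lemma char_poly_unitarily_similar:
  assumes "unitarily_similar A B"
  shows "char_poly A = char_poly B"
proof -
  have "similar_mat A B"
    using assms unfolding unitarily_similar_def similar_mat_def by blast
  then show ?thesis by (rule char_poly_similar)
qed

lemma unitarily_similar_smult: "unitarily_similar A B \<Longrightarrow> unitarily_similar (c \<cdot>\<^sub>m A) (c \<cdot>\<^sub>m B)"
  unfolding unitarily_similar_def using similar_mat_wit_smult by blast

lemma unitarily_similar_add_scalar:
  assumes "unitarily_similar A B" "A \<in> carrier_mat n n"
  shows "unitarily_similar (A + c \<cdot>\<^sub>m 1\<^sub>m n) (B + c \<cdot>\<^sub>m 1\<^sub>m n)"
proof -
  obtain U where U: "unitary n U" and B: "B \<in> carrier_mat n n" and A: "A = U * B * cadj U"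
    using assms by (rule unitarily_similarE)
  note u = unitaryD[OF U]
  have cU: "cadj U \<in> carrier_mat n n" and I: "c \<cdot>\<^sub>m 1\<^sub>m n \<in> carrier_mat n n"
    using u(1) by simp_all
  have UB: "U * B \<in> carrier_mat n n" and UI: "U * (c \<cdot>\<^sub>m 1\<^sub>m n) \<in> carrier_mat n n"
    using u(1) B I by (auto intro: mult_carrier_mat)
  have "U * (B + c \<cdot>\<^sub>m 1\<^sub>m n) * cadj U = U * B * cadj U + U * (c \<cdot>\<^sub>m 1\<^sub>m n) * cadj U"
    unfolding mult_add_distrib_mat[OF u(1) B I] by (rule add_mult_distrib_mat[OF UB UI cU])
  also have "U * (c \<cdot>\<^sub>m 1\<^sub>m n) * cadj U = c \<cdot>\<^sub>m (U * cadj U)"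
    unfolding mult_smult_distrib[OF u(1) one_carrier_mat] right_mult_one_mat[OF u(1)]
    by (rule mult_smult_assoc_mat[OF u(1) cU])
  finally show ?thesis
    unfolding A u(3) by (intro unitarily_similarI[OF U]) (use B in simp_all)
qed

lemma unitarily_similar_four_block:
  assumes "unitarily_similar A B" "A \<in> carrier_mat n n" "X \<in> carrier_mat p p"
  shows "unitarily_similar (four_block_mat X (0\<^sub>m p n) (0\<^sub>m n p) A)
    (four_block_mat X (0\<^sub>m p n) (0\<^sub>m n p) B)"
proof -
  obtain U where U: "unitary n U" and B: "B \<in> carrier_mat n n" and A: "A = U * B * cadj U"
    using assms(1,2) by (rule unitarily_similarE)
  note u = unitaryD[OF U]
  have "similar_mat_wit A B U (cadj U)"
    using u A B assms(2) by (intro similar_mat_witI[of _ _ n]) simp_all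
  from similar_mat_wit_four_block[OF similar_mat_wit_refl[OF assms(3)] this _ _ assms(3,2),
      where UR = "0\<^sub>m p n" and URA = "0\<^sub>m p n" and LL = "0\<^sub>m n p" and LLA = "0\<^sub>m n p"]
  have "similar_mat_wit (four_block_mat X (0\<^sub>m p n) (0\<^sub>m n p) A)
      (four_block_mat X (0\<^sub>m p n) (0\<^sub>m n p) B)
      (four_block_mat (1\<^sub>m p) (0\<^sub>m p n) (0\<^sub>m n p) U)
      (four_block_mat (1\<^sub>m p) (0\<^sub>m p n) (0\<^sub>m n p) (cadj U))"
    using u(1) by simp
  moreover have "four_block_mat (1\<^sub>m p) (0\<^sub>m p n) (0\<^sub>m n p) (cadj U)
      = cadj (four_block_mat (1\<^sub>m p) (0\<^sub>m p n) (0\<^sub>m n p) U)"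
    using cadj_four_block[OF one_carrier_mat zero_carrier_mat zero_carrier_mat u(1)] by simp
  ultimately show ?thesis unfolding unitarily_similar_def by metis
qed

section \<open>Diagonal matrices and the spectral theorem\<close>

definition real_diag_mat :: "real list \<Rightarrow> complex mat" where
  "real_diag_mat es = mat_diag (length es) (\<lambda>j. complex_of_real (es ! j))"

lemma real_diag_mat_carrier [simp]: "length es = n \<Longrightarrow> real_diag_mat es \<in> carrier_mat n n"
  unfolding real_diag_mat_def by simp

lemma real_diag_mat_dim [simp]:
  "dim_row (real_diag_mat es) = length es" "dim_col (real_diag_mat es) = length es"
  unfolding real_diag_mat_def mat_diag_def by simp_all

lemma index_real_diag_mat [simp]:
  "i < length es \<Longrightarrow> j < length es \<Longrightarrow>
    real_diag_mat es $$ (i,j) = (if i = j then complex_of_real (es ! i) else 0)"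
  unfolding real_diag_mat_def mat_diag_def by simp

lemma real_diag_mat_Cons:
  "real_diag_mat (x # es) =
    four_block_mat (real_diag_mat [x]) (0\<^sub>m 1 (length es)) (0\<^sub>m (length es) 1) (real_diag_mat es)"
  by (rule eq_matI) (auto simp: nth_Cons')

lemma char_poly_real_diag_mat:
  "char_poly (real_diag_mat es) = (\<Prod>x\<leftarrow>es. [:- complex_of_real x, 1:])"
proof -
  have "diag_mat (real_diag_mat es) = map complex_of_real es"
    by (rule nth_equalityI) (simp_all add: diag_mat_def)
  then show ?thesis
    using char_poly_upper_triangular[OF real_diag_mat_carrier[OF refl], of es]
    by (simp add: upper_triangular_def o_def)
qed

lemma real_diag_mat_add_scalar:
  "length es = n \<Longrightarrow>
    real_diag_mat es + complex_of_real c \<cdot>\<^sub>m 1\<^sub>m n = real_diag_mat (map (\<lambda>x. x + c) es)"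
  by (rule eq_matI) simp_all

definition normalize_cvec :: "complex vec \<Rightarrow> complex vec" where
  "normalize_cvec w = complex_of_real (1 / sqrt (Re (w \<bullet>c w))) \<cdot>\<^sub>v w"

lemma normalize_cvec_carrier [simp]: "w \<in> carrier_vec n \<Longrightarrow> normalize_cvec w \<in> carrier_vec n"
  unfolding normalize_cvec_def by simp

lemma cscalar_prod_normalize_cvec:
  assumes "u \<in> carrier_vec n" "w \<in> carrier_vec n"
  shows "normalize_cvec u \<bullet>c normalize_cvec w =
    complex_of_real (1 / sqrt (Re (u \<bullet>c u)) * (1 / sqrt (Re (w \<bullet>c w)))) * (u \<bullet>c w)"
  using assms unfolding normalize_cvec_def by (simp add: conjugate_smult_vec)

lemma normalize_cvec_self:
  assumes "w \<in> carrier_vec n" "w \<noteq> 0\<^sub>v n"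
  shows "normalize_cvec w \<bullet>c normalize_cvec w = 1"
proof -
  define r where "r = Re (w \<bullet>c w)"
  have "w \<bullet>c w > 0" using assms by simp
  then have r: "w \<bullet>c w = complex_of_real r" "r > 0"
    unfolding r_def by (simp_all add: less_complex_def complex_eq_iff)
  then have "1 / sqrt r * (1 / sqrt r) * r = 1" by (simp add: field_simps)
  then show ?thesis
    unfolding cscalar_prod_normalize_cvec[OF assms(1,1)] r_def[symmetric] r(1)
    by (simp flip: of_real_mult)
qed

lemma normalize_cvec_unit: "w \<bullet>c w = 1 \<Longrightarrow> normalize_cvec w = w"
  unfolding normalize_cvec_def by simp

lemma unit_eigenvector_exists:
  fixes C :: "complex mat"
  assumes "C \<in> carrier_mat n n" "eigenvalue C x"
  obtains v where "v \<in> carrier_vec n" "v \<bullet>c v = 1" "C *\<^sub>v v = x \<cdot>\<^sub>v v"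
proof -
  obtain w :: "complex vec" where w: "w \<in> carrier_vec n" "w \<noteq> 0\<^sub>v n" "C *\<^sub>v w = x \<cdot>\<^sub>v w"
    using assms unfolding eigenvalue_def eigenvector_def by auto
  define c where "c = complex_of_real (1 / sqrt (Re (w \<bullet>c w)))"
  have "C *\<^sub>v normalize_cvec w = x \<cdot>\<^sub>v normalize_cvec w"
    unfolding normalize_cvec_def c_def[symmetric] mult_mat_vec[OF assms(1) w(1)] w(3)
    by (simp add: smult_smult_assoc mult.commute)
  then show thesis
    using that[of "normalize_cvec w"] w normalize_cvec_self by simp
qed

lemma unitary_mat_of_cols:
  assumes "set us \<subseteq> carrier_vec n" "length us = n"
    and "\<And>i j. i < n \<Longrightarrow> j < n \<Longrightarrow> us ! j \<bullet>c us ! i = (if i = j then 1 else 0)"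
  shows "unitary n (mat_of_cols n us)"
  unfolding unitary_def
proof
  show "mat_of_cols n us \<in> carrier_mat n n" using mat_of_cols_carrier(1)[of n us] assms(2) by simp
  show "cadj (mat_of_cols n us) * mat_of_cols n us = 1\<^sub>m n"
  proof (rule eq_matI)
    fix i j assume "i < dim_row (1\<^sub>m n)" "j < dim_col (1\<^sub>m n)"
    then have ij: "i < n" "j < n" by simp_all
    then have "us ! i \<in> carrier_vec n" "us ! j \<in> carrier_vec n"
      using assms(1,2) nth_mem by blast+
    then have "(cadj (mat_of_cols n us) * mat_of_cols n us) $$ (i,j) = us ! j \<bullet>c us ! i"
      using ij assms(2) by (simp add: scalar_prod_def mat_of_cols_def mult.commute)
    then show "(cadj (mat_of_cols n us) * mat_of_cols n us) $$ (i,j) = 1\<^sub>m n $$ (i,j)"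
      using assms(3)[OF ij] ij by simp
  qed (use assms(2) in simp_all)
qed

lemma orthonormal_basis_with_first:
  fixes v :: "complex vec"
  assumes v: "v \<in> carrier_vec n" and vv: "v \<bullet>c v = 1"
  obtains us where "set us \<subseteq> carrier_vec n" "length us = n"
    "\<And>i j. i < n \<Longrightarrow> j < n \<Longrightarrow> us ! j \<bullet>c us ! i = (if i = j then 1 else 0)" "us ! 0 = v"
proof -
  interpret cof_vec_space n "TYPE(complex)" .
  have v0: "v \<noteq> 0\<^sub>v n" using vv v by auto
  then have "n \<noteq> 0" using v by auto
  note bc = basis_completion[OF v v0]
  obtain vs where bv: "basis_completion v = v # vs"
    using bc(6,7) \<open>n \<noteq> 0\<close> by (cases "basis_completion v") simp_all
  define ws where "ws = gram_schmidt n (basis_completion v)"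
  note gs = gram_schmidt_result[OF bc(2) bc(4) bc(5) ws_def]
  have lws: "length ws = n" using gs(4) bc(6) by simp
  have ws: "ws ! i \<in> carrier_vec n" "ws ! i \<noteq> 0\<^sub>v n" if "i < n" for i
  proof -
    show wi: "ws ! i \<in> carrier_vec n" using gs(3) lws that nth_mem by blast
    have "ws ! i \<bullet>c ws ! i \<noteq> 0" using corthogonalD[OF gs(2)] lws that by simp
    then show "ws ! i \<noteq> 0\<^sub>v n" using wi by auto
  qed
  define us where "us = map normalize_cvec ws"
  have us: "us ! i = normalize_cvec (ws ! i)" "us ! i \<in> carrier_vec n" if "i < n" for i
    using that ws lws unfolding us_def by simp_all
  have "set us \<subseteq> carrier_vec n" using us(2) lws by (auto simp: us_def in_set_conv_nth)
  moreover have "length us = n" using lws by (simp add: us_def)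
  moreover have "us ! j \<bullet>c us ! i = (if i = j then 1 else 0)" if ij: "i < n" "j < n" for i j
  proof (cases "i = j")
    case True
    then show ?thesis
      using us(1)[OF ij(1)] normalize_cvec_self[OF ws[OF ij(1)]] by simp
  next
    case False
    then have "ws ! j \<bullet>c ws ! i = 0" using corthogonalD[OF gs(2), of j i] lws ij by simp
    then show ?thesis
      using False us(1) ij cscalar_prod_normalize_cvec[OF ws(1) ws(1), of j i] by simp
  qed
  moreover have "ws ! 0 = v" using lws \<open>n \<noteq> 0\<close> unfolding ws_def bv
    by (metis gram_schmidt_hd[OF v] hd_conv_nth list.size(3))
  then have "us ! 0 = v" using us(1)[of 0] \<open>n \<noteq> 0\<close> normalize_cvec_unit[OF vv] by simp
  ultimately show thesis by (rule that)
qed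

lemma unitary_with_first_col:
  fixes v :: "complex vec"
  assumes v: "v \<in> carrier_vec n" and vv: "v \<bullet>c v = 1"
  obtains W where "unitary n W" "col W 0 = v"
proof -
  obtain us where us: "set us \<subseteq> carrier_vec n" "length us = n"
    "\<And>i j. i < n \<Longrightarrow> j < n \<Longrightarrow> us ! j \<bullet>c us ! i = (if i = j then 1 else 0)" "us ! 0 = v"
    using orthonormal_basis_with_first[OF v vv] by blast
  have "v \<noteq> 0\<^sub>v n" using vv v by auto
  then have "n \<noteq> 0" using v by auto
  then have "us ! 0 \<in> carrier_vec n" using us(1,2) nth_mem by blast
  then have "col (mat_of_cols n us) 0 = v" using us(2,4) \<open>n \<noteq> 0\<close> by simp
  with unitary_mat_of_cols[OF us(1-3)] show thesis by (rule that)
qed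

lemma col_conj_eigenvector:
  assumes W: "unitary n W" and C: "C \<in> carrier_mat n n" and j: "j < n"
    and eig: "C *\<^sub>v col W j = x \<cdot>\<^sub>v col W j"
  shows "col (cadj W * C * W) j = x \<cdot>\<^sub>v unit_vec n j"
proof -
  note u = unitaryD[OF W]
  have cW: "cadj W \<in> carrier_mat n n" and wj: "col W j \<in> carrier_vec n" using u(1) j by auto
  have "col (cadj W * C * W) j = cadj W *\<^sub>v (C *\<^sub>v col W j)"
    using col_mult2[OF mult_carrier_mat[OF cW C] u(1) j] assoc_mult_mat_vec[OF cW C wj] by simp
  also have "\<dots> = x \<cdot>\<^sub>v (cadj W *\<^sub>v col W j)"
    unfolding eig by (rule mult_mat_vec[OF cW wj])
  also have "cadj W *\<^sub>v col W j = col (cadj W * W) j"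
    using col_mult2[OF cW u(1) j] by simp
  finally show ?thesis using u(2) j by simp
qed

lemma herm_conj:
  assumes "herm n C" "W \<in> carrier_mat n m"
  shows "herm m (cadj W * C * W)"
proof -
  have C: "C \<in> carrier_mat n n" "cadj C = C" using assms(1) unfolding herm_def by simp_all
  have cW: "cadj W \<in> carrier_mat m n" using assms(2) by simp
  have "cadj (cadj W * C * W) = cadj W * (C * W)"
    unfolding cadj_mult[OF mult_carrier_mat[OF cW C(1)] assms(2)] cadj_mult[OF cW C(1)] C(2)
    by (simp add: assoc_mult_mat[OF C(1) assms(2) cW, symmetric])
  also have "\<dots> = cadj W * C * W" by (rule assoc_mult_mat[symmetric, OF cW C(1) assms(2)])
  finally show ?thesis
    unfolding herm_def using mult_carrier_mat[OF mult_carrier_mat[OF cW C(1)] assms(2)] by simp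
qed

lemma hermitian_split_first_col:
  fixes x :: real
  assumes A: "herm (Suc m) A"
    and col0: "\<And>i. i < Suc m \<Longrightarrow> A $$ (i,0) = (if i = 0 then complex_of_real x else 0)"
  obtains C where "herm m C"
    "A = four_block_mat (real_diag_mat [x]) (0\<^sub>m 1 m) (0\<^sub>m m 1) C"
proof -
  have Ac: "A \<in> carrier_mat (Suc m) (Suc m)" and hA: "cadj A = A"
    using A unfolding herm_def by simp_all
  have row0: "A $$ (0,j) = (if j = 0 then x else 0)" if "j < Suc m" for j
  proof -
    have "A $$ (0,j) = cadj A $$ (0,j)" using hA by simp
    then show ?thesis using col0[OF that] Ac that by simp
  qed
  obtain A1 A2 A3 C where sb: "split_block A 1 1 = (A1, A2, A3, C)"
    by (metis prod_cases4)
  have dims: "dim_row A = 1 + m" "dim_col A = 1 + m" using Ac by simp_all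
  note blocks = split_block[OF sb dims]
  have "A1 = real_diag_mat [x]" "A2 = 0\<^sub>m 1 m" "A3 = 0\<^sub>m m 1"
    using sb row0 col0 dims unfolding split_block_def Let_def
    by (auto intro!: eq_matI)
  moreover have "herm m C"
    unfolding herm_def
  proof
    show C: "C \<in> carrier_mat m m" by (rule blocks(4))
    show "cadj C = C"
    proof (rule eq_matI)
      fix i j assume "i < dim_row C" "j < dim_col C"
      then have "i < m" "j < m" using C by simp_all
      then show "cadj C $$ (i,j) = C $$ (i,j)"
        using sb dims hA[THEN arg_cong, of "\<lambda>B. B $$ (i + 1, j + 1)"]
        unfolding split_block_def Let_def by auto
    qed (use C in simp_all)
  qed
  ultimately show thesis using that blocks(5) by simp
qed

theorem hermitian_unitarily_similar_real_diag_mat: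
  assumes "herm n C" and "char_poly C = (\<Prod>x\<leftarrow>es. [:- complex_of_real x, 1:])"
  shows "unitarily_similar C (real_diag_mat es)"
  using assms
proof (induction es arbitrary: n C)
  case Nil
  then have C: "C \<in> carrier_mat n n" unfolding herm_def by simp
  then have "n = 0" using degree_monic_char_poly[OF C] Nil(2) by simp
  then have "C = real_diag_mat []" using C by (intro eq_matI) simp_all
  then show ?case using unitarily_similar_refl[OF C] by simp
next
  case (Cons x es n C)
  have C: "C \<in> carrier_mat n n" using Cons(2) unfolding herm_def by simp
  have "degree (char_poly C) = n" using degree_monic_char_poly[OF C] by simp
  moreover have "degree (\<Prod>y\<leftarrow>x # es. [:- complex_of_real y, 1:]) = length (x # es)"
    by (rule degree_linear_factors)
  ultimately obtain m where n: "n = Suc m" "m = length es"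
    unfolding Cons(3) by simp
  have "eigenvalue C (complex_of_real x)"
    unfolding eigenvalue_root_char_poly[OF C] Cons(3) by simp
  then obtain v where v: "v \<in> carrier_vec n" "v \<bullet>c v = 1" "C *\<^sub>v v = complex_of_real x \<cdot>\<^sub>v v"
    by (rule unit_eigenvector_exists[OF C])
  obtain W where W: "unitary n W" and Wv: "col W 0 = v"
    using v(1,2) by (rule unitary_with_first_col)
  define A where "A = cadj W * C * W"
  have CA: "unitarily_similar C A" unfolding A_def by (rule unitarily_similar_conj[OF W C])
  have "herm n A" unfolding A_def by (rule herm_conj[OF Cons(2) unitaryD(1)[OF W]])
  moreover have "A $$ (i,0) = (if i = 0 then complex_of_real x else 0)" if "i < Suc m" for i
  proof -
    have "col A 0 = complex_of_real x \<cdot>\<^sub>v unit_vec n 0"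
      unfolding A_def using col_conj_eigenvector[OF W C] n v(3) Wv by simp
    moreover have "A $$ (i,0) = col A 0 $ i"
      using that n unitaryD(1)[OF W] C unfolding A_def by simp
    ultimately show ?thesis using that n by simp
  qed
  ultimately obtain C' where C': "herm m C'"
    and blk: "A = four_block_mat (real_diag_mat [x]) (0\<^sub>m 1 m) (0\<^sub>m m 1) C'"
    using hermitian_split_first_col[of m A x] n(1) by auto
  have C'c: "C' \<in> carrier_mat m m" using C' unfolding herm_def by simp
  have x1: "real_diag_mat [x] \<in> carrier_mat 1 1" by simp
  have "[:- complex_of_real x, 1:] * char_poly C' =
      [:- complex_of_real x, 1:] * (\<Prod>x\<leftarrow>es. [:- complex_of_real x, 1:])"
  proof -
    have "char_poly C = char_poly A" by (rule char_poly_unitarily_similar[OF CA])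
    also have "\<dots> = char_poly (real_diag_mat [x]) * char_poly C'"
      unfolding blk
      by (rule char_poly_four_block_zeros_col) (use C'c x1 in simp_all)
    finally show ?thesis using Cons(3) by (simp add: char_poly_real_diag_mat)
  qed
  then have "char_poly C' = (\<Prod>x\<leftarrow>es. [:- complex_of_real x, 1:])"
    by (rule mult_left_cancel[THEN iffD1, rotated]) simp
  with Cons.IH[OF C'] have "unitarily_similar C' (real_diag_mat es)" .
  then have "unitarily_similar A (real_diag_mat (x # es))"
    unfolding blk real_diag_mat_Cons[of x es] n(2)[symmetric]
    by (rule unitarily_similar_four_block[OF _ C'c x1])
  then show ?case by (rule unitarily_similar_trans[OF CA])
qed

section \<open>Sylvester's determinant identity\<close>

lemma det_four_block_scalar_left:
  fixes P :: "'a :: idom mat"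
  assumes P: "P \<in> carrier_mat m n" and Q: "Q \<in> carrier_mat n m"
  shows "det (four_block_mat (x \<cdot>\<^sub>m 1\<^sub>m m) P Q (1\<^sub>m n)) = det (x \<cdot>\<^sub>m 1\<^sub>m m - P * Q)"
proof -
  have PQ: "P * Q \<in> carrier_mat m m" and xm: "x \<cdot>\<^sub>m 1\<^sub>m m \<in> carrier_mat m m"
    and mP: "- P \<in> carrier_mat m n" using P Q by auto
  define L where "L = four_block_mat (1\<^sub>m m) (- P) (0\<^sub>m n m) (1\<^sub>m n)"
  define M where "M = four_block_mat (x \<cdot>\<^sub>m 1\<^sub>m m) P Q (1\<^sub>m n)"
  have L: "L \<in> carrier_mat (m + n) (m + n)" and M: "M \<in> carrier_mat (m + n) (m + n)"
    unfolding L_def M_def using P Q by auto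
  have "L * M = four_block_mat (x \<cdot>\<^sub>m 1\<^sub>m m - P * Q) (0\<^sub>m m n) Q (1\<^sub>m n)"
    unfolding L_def M_def using P Q
    by (subst mult_four_block_mat[OF one_carrier_mat mP zero_carrier_mat one_carrier_mat xm P Q
          one_carrier_mat]) (simp add: add_uminus_minus_mat[OF xm PQ] add_uminus_minus_mat[OF P P])
  then have "det (L * M) = det (x \<cdot>\<^sub>m 1\<^sub>m m - P * Q)"
    using det_four_block_mat_upper_right_zero[OF minus_carrier_mat[OF PQ] refl Q one_carrier_mat,
        of "x \<cdot>\<^sub>m 1\<^sub>m m"] by simp
  moreover have "det L = 1"
    unfolding L_def using det_four_block_mat_lower_left_zero[OF one_carrier_mat mP refl one_carrier_mat]
    by simp
  ultimately show ?thesis using det_mult[OF L M] unfolding M_def by simp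
qed

lemma det_four_block_scalar_right:
  fixes P :: "'a :: idom mat"
  assumes P: "P \<in> carrier_mat m n" and Q: "Q \<in> carrier_mat n m"
  shows "x ^ n * det (four_block_mat (x \<cdot>\<^sub>m 1\<^sub>m m) P Q (1\<^sub>m n)) = x ^ m * det (x \<cdot>\<^sub>m 1\<^sub>m n - Q * P)"
proof -
  have QP: "Q * P \<in> carrier_mat n n" and xm: "x \<cdot>\<^sub>m 1\<^sub>m m \<in> carrier_mat m m"
    and xn: "x \<cdot>\<^sub>m 1\<^sub>m n \<in> carrier_mat n n" and mQ: "- Q \<in> carrier_mat n m" using P Q by auto
  define L where "L = four_block_mat (1\<^sub>m m) (0\<^sub>m m n) (- Q) (x \<cdot>\<^sub>m 1\<^sub>m n)"
  define M where "M = four_block_mat (x \<cdot>\<^sub>m 1\<^sub>m m) P Q (1\<^sub>m n)"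
  have L: "L \<in> carrier_mat (m + n) (m + n)" and M: "M \<in> carrier_mat (m + n) (m + n)"
    unfolding L_def M_def using P Q by auto
  have "- Q * (x \<cdot>\<^sub>m 1\<^sub>m m) + x \<cdot>\<^sub>m 1\<^sub>m n * Q = 0\<^sub>m n m"
    using Q mult_smult_distrib[OF Q one_carrier_mat[of m], of x]
      mult_smult_assoc_mat[OF one_carrier_mat[of n] Q, of x] uminus_l_inv_mat[of "x \<cdot>\<^sub>m Q" n m]
    by simp
  moreover have "- Q * P + x \<cdot>\<^sub>m 1\<^sub>m n * 1\<^sub>m n = x \<cdot>\<^sub>m 1\<^sub>m n - Q * P"
    using P Q comm_add_mat[of "- (Q * P)" n n "x \<cdot>\<^sub>m 1\<^sub>m n"] add_uminus_minus_mat[OF xn QP] by simp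
  ultimately have "L * M = four_block_mat (x \<cdot>\<^sub>m 1\<^sub>m m) P (0\<^sub>m n m) (x \<cdot>\<^sub>m 1\<^sub>m n - Q * P)"
    unfolding L_def M_def using P Q
    by (subst mult_four_block_mat[OF one_carrier_mat zero_carrier_mat mQ xn xm P Q one_carrier_mat])
      simp
  then have "det (L * M) = x ^ m * det (x \<cdot>\<^sub>m 1\<^sub>m n - Q * P)"
    using det_four_block_mat_lower_left_zero[OF xm P refl minus_carrier_mat[OF QP], of "x \<cdot>\<^sub>m 1\<^sub>m n"]
    by simp
  moreover have "det L = x ^ n"
    unfolding L_def using det_four_block_mat_upper_right_zero[OF one_carrier_mat refl mQ xn] by simp
  ultimately show ?thesis using det_mult[OF L M] unfolding M_def by simp
qed

lemma sylvester_det: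
  fixes P :: "'a :: idom mat"
  assumes "P \<in> carrier_mat m n" "Q \<in> carrier_mat n m"
  shows "x ^ n * det (x \<cdot>\<^sub>m 1\<^sub>m m - P * Q) = x ^ m * det (x \<cdot>\<^sub>m 1\<^sub>m n - Q * P)"
  using det_four_block_scalar_left[OF assms] det_four_block_scalar_right[OF assms] by simp

lemma char_poly_matrix_alt:
  assumes "M \<in> carrier_mat n n"
  shows "char_poly_matrix M = [:0,1:] \<cdot>\<^sub>m 1\<^sub>m n - map_mat (\<lambda>a. [:a:]) M"
  unfolding char_poly_matrix_def by (rule eq_matI) (use assms in simp_all)

lemma char_poly_mult_swap:
  fixes A :: "'a :: idom mat"
  assumes A: "A \<in> carrier_mat m n" and B: "B \<in> carrier_mat n m"
  shows "[:0,1:] ^ n * char_poly (A * B) = [:0,1:] ^ m * char_poly (B * A)"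
proof -
  let ?h = "map_mat (\<lambda>a. [:a:])"
  have "char_poly (A * B) = det ([:0,1:] \<cdot>\<^sub>m 1\<^sub>m m - ?h A * ?h B)"
    unfolding char_poly_def char_poly_matrix_alt[OF mult_carrier_mat[OF A B]] map_poly_mult(1)[OF A B] ..
  moreover have "char_poly (B * A) = det ([:0,1:] \<cdot>\<^sub>m 1\<^sub>m n - ?h B * ?h A)"
    unfolding char_poly_def char_poly_matrix_alt[OF mult_carrier_mat[OF B A]] map_poly_mult(1)[OF B A] ..
  moreover have "?h A \<in> carrier_mat m n" "?h B \<in> carrier_mat n m" using A B by simp_all
  ultimately show ?thesis using sylvester_det by metis
qed

lemma unitarily_similar_mult_cadj:
  assumes b: "b \<in> carrier_mat (Suc k) k"
    and sim: "unitarily_similar (cadj b * b) (real_diag_mat es)"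
  shows "unitarily_similar (b * cadj b) (real_diag_mat (es @ [0]))"
proof -
  have cb: "cadj b \<in> carrier_mat k (Suc k)" using b by simp
  have "[:0,1:] ^ k * char_poly (b * cadj b) = [:0,1:] ^ k * ([:0,1:] * char_poly (cadj b * b))"
    using char_poly_mult_swap[OF b cb] by (simp add: ac_simps)
  then have "char_poly (b * cadj b) = [:0,1:] * char_poly (cadj b * b)"
    by (rule mult_left_cancel[THEN iffD1, rotated]) simp
  also have "\<dots> = (\<Prod>x\<leftarrow>es @ [0]. [:- complex_of_real x, 1:])"
    unfolding char_poly_unitarily_similar[OF sim] char_poly_real_diag_mat by (simp add: mult.commute)
  finally have "char_poly (b * cadj b) = (\<Prod>x\<leftarrow>es @ [0]. [:- complex_of_real x, 1:])" .
  moreover have "herm (Suc k) (b * cadj b)"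
    unfolding herm_def using mult_carrier_mat[OF b cb] by (simp add: cadj_mult[OF b cb])
  ultimately show ?thesis by (rule hermitian_unitarily_similar_real_diag_mat[rotated])
qed

section \<open>Equivariance of the moment map\<close>

definition sum_mats :: "'e set \<Rightarrow> ('e \<Rightarrow> complex mat) \<Rightarrow> nat \<Rightarrow> complex mat" where
  "sum_mats S X n = mat n n (\<lambda>pq. \<Sum>\<alpha>\<in>S. X \<alpha> $$ pq)"

lemma sum_mats_carrier [simp]: "sum_mats S X n \<in> carrier_mat n n"
  unfolding sum_mats_def by simp

lemma sum_mats_cong: "(\<And>\<alpha>. \<alpha> \<in> S \<Longrightarrow> X \<alpha> = Y \<alpha>) \<Longrightarrow> sum_mats S X n = sum_mats S Y n"
  unfolding sum_mats_def by simp

lemma sum_mats_conj: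
  assumes "finite S" "\<And>\<alpha>. \<alpha> \<in> S \<Longrightarrow> X \<alpha> \<in> carrier_mat n n" "U \<in> carrier_mat k n"
  shows "U * sum_mats S X n * cadj U = sum_mats S (\<lambda>\<alpha>. U * X \<alpha> * cadj U) k"
  using assms
proof (induction S rule: finite_induct)
  case empty
  have "U * 0\<^sub>m n n * cadj U = 0\<^sub>m k k" using empty.prems(2) by simp
  then show ?case unfolding sum_mats_def by (simp add: zero_mat_def)
next
  case (insert a S)
  have Xa: "X a \<in> carrier_mat n n" and U: "U \<in> carrier_mat k n" using insert.prems by simp_all
  have cU: "cadj U \<in> carrier_mat n k" using U by simp
  have split: "sum_mats (insert a S) Y m = Y a + sum_mats S Y m" if "Y a \<in> carrier_mat m m" for Y m
    unfolding sum_mats_def by (rule eq_matI) (use insert.hyps that in simp_all)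
  have "U * sum_mats (insert a S) X n * cadj U = U * (X a + sum_mats S X n) * cadj U"
    by (simp only: split[of X n, OF Xa])
  also have "\<dots> = U * X a * cadj U + U * sum_mats S X n * cadj U"
    unfolding mult_add_distrib_mat[OF U Xa sum_mats_carrier]
    by (rule add_mult_distrib_mat[OF mult_carrier_mat[OF U Xa] mult_carrier_mat[OF U sum_mats_carrier] cU])
  also have "U * sum_mats S X n * cadj U = sum_mats S (\<lambda>\<alpha>. U * X \<alpha> * cadj U) k"
    using insert by simp
  finally show ?case
    using split[of "\<lambda>\<alpha>. U * X \<alpha> * cadj U" k] mult_carrier_mat[OF mult_carrier_mat[OF U Xa] cU] by simp
qed

lemma moment_eq_sum_mats:
  "moment E s t nd f v = sum_mats {\<alpha>\<in>E. t \<alpha> = v} (\<lambda>\<alpha>. f \<alpha> * cadj (f \<alpha>)) (nd v)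
    - sum_mats {\<alpha>\<in>E. s \<alpha> = v} (\<lambda>\<alpha>. cadj (f \<alpha>) * f \<alpha>) (nd v)"
  unfolding moment_def sum_mats_def by (rule eq_matI) simp_all

lemma moment_dim [simp]:
  "dim_row (moment E s t nd f v) = nd v" "dim_col (moment E s t nd f v) = nd v"
  unfolding moment_def by simp_all

lemma index_moment:
  "p < nd v \<Longrightarrow> q < nd v \<Longrightarrow> moment E s t nd f v $$ (p,q) =
      (\<Sum>\<alpha>\<in>{\<alpha>\<in>E. t \<alpha> = v}. (f \<alpha> * cadj (f \<alpha>)) $$ (p,q))
    - (\<Sum>\<alpha>\<in>{\<alpha>\<in>E. s \<alpha> = v}. (cadj (f \<alpha>) * f \<alpha>) $$ (p,q))"
  unfolding moment_def by simp

lemma unitary_conj_mult_cadj: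
  assumes U: "unitary a Ua" and V: "unitary b Ub" and F: "F \<in> carrier_mat a b"
  shows "(Ua * F * cadj Ub) * cadj (Ua * F * cadj Ub) = Ua * (F * cadj F) * cadj Ua"
proof -
  note u = unitaryD[OF U] and v = unitaryD[OF V]
  have cUa: "cadj Ua \<in> carrier_mat a a" and cUb: "cadj Ub \<in> carrier_mat b b" using u v by simp_all
  have cF: "cadj F \<in> carrier_mat b a" using F by simp
  have Q: "cadj F * cadj Ua \<in> carrier_mat b a" using cF cUa by (rule mult_carrier_mat)
  have P: "Ua * F \<in> carrier_mat a b" using u(1) F by (rule mult_carrier_mat)
  have "cadj Ub * (Ub * (cadj F * cadj Ua)) = (cadj Ub * Ub) * (cadj F * cadj Ua)"
    by (rule assoc_mult_mat[symmetric, OF cUb v(1) Q])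
  also have "\<dots> = cadj F * cadj Ua" unfolding v(2) by (rule left_mult_one_mat[OF Q])
  finally have cancel: "cadj Ub * (Ub * (cadj F * cadj Ua)) = cadj F * cadj Ua" .
  have "(Ua * F * cadj Ub) * cadj (Ua * F * cadj Ub) = Ua * F * (cadj Ub * (Ub * (cadj F * cadj Ua)))"
    unfolding cadj_mult[OF P cUb] cadj_mult[OF u(1) F] cadj_cadj
    by (rule assoc_mult_mat[OF P cUb mult_carrier_mat[OF v(1) Q]])
  also have "\<dots> = Ua * (F * cadj F) * cadj Ua"
    unfolding cancel
    by (simp only: assoc_mult_mat[OF u(1) F Q] assoc_mult_mat[OF F cF cUa]
        assoc_mult_mat[OF u(1) mult_carrier_mat[OF F cF] cUa])
  finally show ?thesis .
qed

lemma unitary_conj_cadj_mult: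
  assumes U: "unitary a Ua" and V: "unitary b Ub" and F: "F \<in> carrier_mat a b"
  shows "cadj (Ua * F * cadj Ub) * (Ua * F * cadj Ub) = Ub * (cadj F * F) * cadj Ub"
proof -
  have cF: "cadj F \<in> carrier_mat b a" using F by simp
  note u = unitaryD[OF U] and v = unitaryD[OF V]
  have "cadj (Ua * F * cadj Ub) = Ub * cadj F * cadj Ua"
    using u(1) v(1) F cF
    by (simp add: cadj_mult[of _ a b _ b] cadj_mult[of _ a a _ b] assoc_mult_mat[of _ b b _ a _ a])
  moreover have "cadj (Ub * cadj F * cadj Ua) = Ua * F * cadj Ub"
    using u(1) v(1) F cF
    by (simp add: cadj_mult[of _ b a _ a] cadj_mult[of _ b b _ a] assoc_mult_mat[of _ a a _ b _ b])
  ultimately show ?thesis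
    using unitary_conj_mult_cadj[OF V U cF] by simp
qed

lemma moment_unitary_conj:
  assumes E: "finite E" and f: "f \<in> rep_space E s t nd" and U: "\<And>w. unitary (nd w) (U w)"
  shows "moment E s t nd (\<lambda>\<alpha>. U (t \<alpha>) * f \<alpha> * cadj (U (s \<alpha>))) v
    = U v * moment E s t nd f v * cadj (U v)"
proof -
  have fa: "f \<alpha> \<in> carrier_mat (nd (t \<alpha>)) (nd (s \<alpha>))" if "\<alpha> \<in> E" for \<alpha>
    using f that unfolding rep_space_def by simp
  have Uv: "U v \<in> carrier_mat (nd v) (nd v)" using unitaryD(1)[OF U] .
  have ff: "f \<alpha> * cadj (f \<alpha>) \<in> carrier_mat (nd (t \<alpha>)) (nd (t \<alpha>))"
    "cadj (f \<alpha>) * f \<alpha> \<in> carrier_mat (nd (s \<alpha>)) (nd (s \<alpha>))" if "\<alpha> \<in> E" for \<alpha>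
    using fa[OF that] by (auto intro: mult_carrier_mat)
  let ?f = "\<lambda>\<alpha>. U (t \<alpha>) * f \<alpha> * cadj (U (s \<alpha>))"
  let ?In = "{\<alpha>\<in>E. t \<alpha> = v}" and ?Out = "{\<alpha>\<in>E. s \<alpha> = v}"
  have "sum_mats ?In (\<lambda>\<alpha>. ?f \<alpha> * cadj (?f \<alpha>)) (nd v)
      = sum_mats ?In (\<lambda>\<alpha>. U v * (f \<alpha> * cadj (f \<alpha>)) * cadj (U v)) (nd v)"
    using unitary_conj_mult_cadj[OF U U fa] by (intro sum_mats_cong) auto
  also have "\<dots> = U v * sum_mats ?In (\<lambda>\<alpha>. f \<alpha> * cadj (f \<alpha>)) (nd v) * cadj (U v)"
    using E ff by (intro sum_mats_conj[symmetric, OF _ _ Uv]) auto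
  finally have In: "sum_mats ?In (\<lambda>\<alpha>. ?f \<alpha> * cadj (?f \<alpha>)) (nd v)
      = U v * sum_mats ?In (\<lambda>\<alpha>. f \<alpha> * cadj (f \<alpha>)) (nd v) * cadj (U v)" .
  have "sum_mats ?Out (\<lambda>\<alpha>. cadj (?f \<alpha>) * ?f \<alpha>) (nd v)
      = sum_mats ?Out (\<lambda>\<alpha>. U v * (cadj (f \<alpha>) * f \<alpha>) * cadj (U v)) (nd v)"
    using unitary_conj_cadj_mult[OF U U fa] by (intro sum_mats_cong) auto
  also have "\<dots> = U v * sum_mats ?Out (\<lambda>\<alpha>. cadj (f \<alpha>) * f \<alpha>) (nd v) * cadj (U v)"
    using E ff by (intro sum_mats_conj[symmetric, OF _ _ Uv]) auto
  finally have Out: "sum_mats ?Out (\<lambda>\<alpha>. cadj (?f \<alpha>) * ?f \<alpha>) (nd v)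
      = U v * sum_mats ?Out (\<lambda>\<alpha>. cadj (f \<alpha>) * f \<alpha>) (nd v) * cadj (U v)" .
  have "U v * (X - Y) * cadj (U v) = U v * X * cadj (U v) - U v * Y * cadj (U v)"
    if "X \<in> carrier_mat (nd v) (nd v)" "Y \<in> carrier_mat (nd v) (nd v)" for X Y
    using that Uv
    by (simp add: mult_minus_distrib_mat[OF Uv] minus_mult_distrib_mat[of _ "nd v" "nd v" _ _ "nd v"])
  then show ?thesis unfolding moment_eq_sum_mats In Out by simp
qed

lemma in_moment_image_unitarily_similar:
  assumes E: "finite E" and B: "in_moment_image V E s t nd B"
    and sim: "\<And>v. v \<in> V \<Longrightarrow> unitarily_similar (B' v) (B v)"
  shows "in_moment_image V E s t nd B'"
proof -
  obtain f where f: "f \<in> rep_space E s t nd" and mf: "\<forall>v\<in>V. moment E s t nd f v = B v"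
    using B unfolding in_moment_image_def by blast
  have "\<exists>W. unitary (nd v) W \<and> B' v = W * B v * cadj W" if v: "v \<in> V" for v
  proof -
    have "B v \<in> carrier_mat (nd v) (nd v)" using mf v by (metis carrier_matI moment_dim)
    then have "B' v \<in> carrier_mat (nd v) (nd v)" by (rule unitarily_similar_carrier[OF sim[OF v]])
    then show ?thesis by (rule unitarily_similarE[OF sim[OF v]]) blast
  qed
  then obtain W where W: "\<And>v. v \<in> V \<Longrightarrow> unitary (nd v) (W v) \<and> B' v = W v * B v * cadj (W v)"
    by metis
  define U where "U v = (if v \<in> V then W v else 1\<^sub>m (nd v))" for v
  have U: "unitary (nd w) (U w)" for w
    using W unitary_one unfolding U_def by auto
  define g where "g \<alpha> = U (t \<alpha>) * f \<alpha> * cadj (U (s \<alpha>))" for \<alpha>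
  have "g \<in> rep_space E s t nd"
    using f unitaryD(1)[OF U] unfolding rep_space_def g_def
    by (auto intro!: mult_carrier_mat cadj_carrier_mat)
  moreover have "moment E s t nd g v = B' v" if "v \<in> V" for v
    using moment_unitary_conj[OF E f U, of v] W[OF that] mf that unfolding g_def U_def by simp
  ultimately show ?thesis unfolding in_moment_image_def by blast
qed

text \<open>An arrow of \<open>Q\<close>
  with a zero-dimensional endpoint has no counterpart in \<open>Q\<^sub>d\<close>, but its matrix in \<open>R\<^sub>d(Q)\<close> is
  empty anyway.\<close>

definition orig_rep ::
  "('e \<Rightarrow> 'v) \<Rightarrow> ('e \<Rightarrow> 'v) \<Rightarrow> ('v \<Rightarrow> nat) \<Rightarrow> (('v,'e) leg_arrow \<Rightarrow> complex mat) \<Rightarrow> 'e \<Rightarrow> complex mat"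
where
  "orig_rep s t d g \<alpha> =
    (if 1 \<le> d (s \<alpha>) \<and> 1 \<le> d (t \<alpha>) then g (Orig \<alpha>) else 0\<^sub>m (d (t \<alpha>)) (d (s \<alpha>)))"

lemma leg_rep_carrier:
  assumes "g \<in> rep_space (leg_arrows V E s t d) (leg_src s d) (leg_tgt t d) leg_dim"
  shows "\<And>\<alpha>. \<alpha> \<in> E \<Longrightarrow> 1 \<le> d (s \<alpha>) \<Longrightarrow> 1 \<le> d (t \<alpha>) \<Longrightarrow> g (Orig \<alpha>) \<in> carrier_mat (d (t \<alpha>)) (d (s \<alpha>))"
    and "\<And>i j. i \<in> V \<Longrightarrow> 1 \<le> j \<Longrightarrow> j < d i \<Longrightarrow> g (Leg i j) \<in> carrier_mat (Suc j) j"
proof -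
  have rep: "g x \<in> carrier_mat (leg_dim (leg_tgt t d x)) (leg_dim (leg_src s d x))"
    if "x \<in> leg_arrows V E s t d" for x
    using assms that unfolding rep_space_def by blast
  show "g (Orig \<alpha>) \<in> carrier_mat (d (t \<alpha>)) (d (s \<alpha>))"
    if "\<alpha> \<in> E" "1 \<le> d (s \<alpha>)" "1 \<le> d (t \<alpha>)" for \<alpha>
    using rep[of "Orig \<alpha>"] that by (simp add: leg_arrows_def leg_dim_def)
  show "g (Leg i j) \<in> carrier_mat (Suc j) j" if "i \<in> V" "1 \<le> j" "j < d i" for i j
    using rep[of "Leg i j"] that by (simp add: leg_arrows_def leg_dim_def)
qed

lemma leg_arrows_into:
  assumes "i \<in> V" "1 \<le> k" "k \<le> d i"
  shows "{x \<in> leg_arrows V E s t d. leg_tgt t d x = (i,k)}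
    = Orig ` {\<alpha>\<in>E. (t \<alpha> = i \<and> 1 \<le> d (s \<alpha>)) \<and> k = d i} \<union> (if 2 \<le> k then {Leg i (k - 1)} else {})"
  using assms by (auto simp: leg_arrows_def)

lemma leg_arrows_out_of:
  assumes "i \<in> V" "1 \<le> k" "k \<le> d i"
  shows "{x \<in> leg_arrows V E s t d. leg_src s d x = (i,k)}
    = Orig ` {\<alpha>\<in>E. (s \<alpha> = i \<and> 1 \<le> d (t \<alpha>)) \<and> k = d i} \<union> (if k < d i then {Leg i k} else {})"
  using assms by (auto simp: leg_arrows_def)

lemma sum_Orig_Leg:
  fixes h :: "('v,'e) leg_arrow \<Rightarrow> complex"
  assumes "finite E"
  shows "(\<Sum>x\<in>Orig ` {\<alpha>\<in>E. P \<alpha> \<and> c} \<union> (if b then {Leg i j} else {}). h x)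
    = (if c then \<Sum>\<alpha>\<in>{\<alpha>\<in>E. P \<alpha>}. h (Orig \<alpha>) else 0) + (if b then h (Leg i j) else 0)"
proof -
  have "(\<Sum>x\<in>Orig ` {\<alpha>\<in>E. P \<alpha> \<and> c} \<union> (if b then {Leg i j} else {}). h x)
      = (\<Sum>x\<in>Orig ` {\<alpha>\<in>E. P \<alpha> \<and> c}. h x) + (\<Sum>x\<in>(if b then {Leg i j} else {}). h x)"
    using assms by (intro sum.union_disjoint) auto
  also have "(\<Sum>x\<in>Orig ` {\<alpha>\<in>E. P \<alpha> \<and> c}. h x) = (\<Sum>\<alpha>\<in>{\<alpha>\<in>E. P \<alpha> \<and> c}. h (Orig \<alpha>))"
    by (rule sum.reindex_cong[of Orig]) (simp_all add: inj_on_def)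
  finally show ?thesis by simp
qed

lemma index_moment_orig_rep:
  assumes "finite E" "p < d i" "q < d i"
  shows "moment E s t d (orig_rep s t d g) i $$ (p,q) =
      (\<Sum>\<alpha>\<in>{\<alpha>\<in>E. t \<alpha> = i \<and> 1 \<le> d (s \<alpha>)}. (g (Orig \<alpha>) * cadj (g (Orig \<alpha>))) $$ (p,q))
    - (\<Sum>\<alpha>\<in>{\<alpha>\<in>E. s \<alpha> = i \<and> 1 \<le> d (t \<alpha>)}. (cadj (g (Orig \<alpha>)) * g (Orig \<alpha>)) $$ (p,q))"
proof -
  let ?f = "orig_rep s t d g"
  have "(\<Sum>\<alpha>\<in>{\<alpha>\<in>E. t \<alpha> = i}. (?f \<alpha> * cadj (?f \<alpha>)) $$ (p,q))
      = (\<Sum>\<alpha>\<in>{\<alpha>\<in>E. t \<alpha> = i \<and> 1 \<le> d (s \<alpha>)}. (g (Orig \<alpha>) * cadj (g (Orig \<alpha>))) $$ (p,q))"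
    using assms by (intro sum.mono_neutral_cong_right) (auto simp: orig_rep_def scalar_prod_def)
  moreover have "(\<Sum>\<alpha>\<in>{\<alpha>\<in>E. s \<alpha> = i}. (cadj (?f \<alpha>) * ?f \<alpha>) $$ (p,q))
      = (\<Sum>\<alpha>\<in>{\<alpha>\<in>E. s \<alpha> = i \<and> 1 \<le> d (t \<alpha>)}. (cadj (g (Orig \<alpha>)) * g (Orig \<alpha>)) $$ (p,q))"
    using assms by (intro sum.mono_neutral_cong_right) (auto simp: orig_rep_def scalar_prod_def)
  ultimately show ?thesis unfolding index_moment[where nd = d and v = i, OF assms(2,3)] by simp
qed

lemma moment_leg_quiver:
  assumes E: "finite E" and i: "i \<in> V" and k: "1 \<le> k" "k \<le> d i"
    and g: "g \<in> rep_space (leg_arrows V E s t d) (leg_src s d) (leg_tgt t d) leg_dim"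
  shows "moment (leg_arrows V E s t d) (leg_src s d) (leg_tgt t d) leg_dim g (i,k)
    = (if k = d i then moment E s t d (orig_rep s t d g) i else 0\<^sub>m k k)
      + (if 2 \<le> k then g (Leg i (k - 1)) * cadj (g (Leg i (k - 1))) else 0\<^sub>m k k)
      - (if k < d i then cadj (g (Leg i k)) * g (Leg i k) else 0\<^sub>m k k)"
    (is "?L = ?top + ?below - ?above")
proof -
  note leg = leg_rep_carrier(2)[OF g i]
  have "g (Leg i (k - 1)) \<in> carrier_mat k (k - 1)" if "2 \<le> k"
    using leg[of "k - 1"] k that by simp
  then have dims: "?top \<in> carrier_mat k k" "?below \<in> carrier_mat k k" "?above \<in> carrier_mat k k"
    using leg[of k] k by (auto intro!: mult_carrier_mat)
  show ?thesis
  proof (rule eq_matI)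
    fix p q assume "p < dim_row (?top + ?below - ?above)" "q < dim_col (?top + ?below - ?above)"
    then have pq: "p < k" "q < k" using dims by simp_all
    then have pq': "p < leg_dim (i,k)" "q < leg_dim (i,k)" by (simp_all add: leg_dim_def)
    show "?L $$ (p,q) = (?top + ?below - ?above) $$ (p,q)"
      unfolding index_moment[where nd = leg_dim, OF pq']
        leg_arrows_into[where d = d and E = E and s = s and t = t, OF i k]
        leg_arrows_out_of[where d = d and E = E and s = s and t = t, OF i k] sum_Orig_Leg[OF E]
      using dims k pq by (simp add: index_moment_orig_rep[OF E])
  qed (use dims in \<open>simp_all add: leg_dim_def\<close>)
qed

section \<open>Extending by legs\<close>

text \<open>The leg \<open>\<beta>\<^sub>k\<close> of the construction, with the list \<open>a\<close> indexed from \<open>0\<close>.\<close>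

definition beta_leg :: "real list \<Rightarrow> nat \<Rightarrow> complex mat" where
  "beta_leg a k = mat (Suc k) k (\<lambda>(p,q). if p = q then complex_of_real (sqrt (a ! k - a ! p)) else 0)"

lemma beta_leg_carrier [simp]: "beta_leg a k \<in> carrier_mat (Suc k) k"
  unfolding beta_leg_def by simp

lemma beta_leg_dim [simp]: "dim_row (beta_leg a k) = Suc k" "dim_col (beta_leg a k) = k"
  unfolding beta_leg_def by simp_all

lemma sqrt_mult_cnj_sqrt: "0 \<le> x \<Longrightarrow> complex_of_real (sqrt x) * cnj (complex_of_real (sqrt x)) = complex_of_real x"
  by (simp flip: of_real_mult)

lemma cadj_beta_leg_mult:
  assumes "sorted a" "k < length a"
  shows "cadj (beta_leg a k) * beta_leg a k = real_diag_mat (map (\<lambda>p. a ! k - a ! p) [0..<k])"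
proof (rule eq_matI)
  let ?r = "\<lambda>l. complex_of_real (sqrt (a ! k - a ! l))"
  fix p q assume "p < dim_row (real_diag_mat (map (\<lambda>p. a ! k - a ! p) [0..<k]))"
    "q < dim_col (real_diag_mat (map (\<lambda>p. a ! k - a ! p) [0..<k]))"
  then have pq: "p < k" "q < k" by simp_all
  have "(cadj (beta_leg a k) * beta_leg a k) $$ (p,q)
      = (\<Sum>l\<in>{0..<Suc k}. cnj (beta_leg a k $$ (l,p)) * beta_leg a k $$ (l,q))"
    using pq by (simp add: scalar_prod_def)
  also have "\<dots> = (\<Sum>l\<in>{0..<Suc k}. if l = p then (if q = p then ?r p * cnj (?r p) else 0) else 0)"
    by (rule sum.cong) (use pq in \<open>simp_all add: beta_leg_def mult.commute\<close>)
  also have "\<dots> = (if q = p then complex_of_real (a ! k - a ! p) else 0)"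
    using pq assms sqrt_mult_cnj_sqrt[of "a ! k - a ! p"] by (simp add: sum.delta sorted_nth_mono)
  finally show "(cadj (beta_leg a k) * beta_leg a k) $$ (p,q)
      = real_diag_mat (map (\<lambda>p. a ! k - a ! p) [0..<k]) $$ (p,q)"
    using pq by simp
qed simp_all

lemma beta_leg_mult_cadj:
  assumes "sorted a" "k < length a"
  shows "beta_leg a k * cadj (beta_leg a k) = real_diag_mat (map (\<lambda>p. a ! k - a ! p) [0..<Suc k])"
proof (rule eq_matI)
  let ?r = "\<lambda>l. complex_of_real (sqrt (a ! k - a ! l))"
  fix p q assume "p < dim_row (real_diag_mat (map (\<lambda>p. a ! k - a ! p) [0..<Suc k]))"
    "q < dim_col (real_diag_mat (map (\<lambda>p. a ! k - a ! p) [0..<Suc k]))"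
  then have pq: "p < Suc k" "q < Suc k" by simp_all
  have "(beta_leg a k * cadj (beta_leg a k)) $$ (p,q)
      = (\<Sum>l\<in>{0..<k}. beta_leg a k $$ (p,l) * cnj (beta_leg a k $$ (q,l)))"
    using pq by (simp add: scalar_prod_def)
  also have "\<dots> = (\<Sum>l\<in>{0..<k}. if l = p then (if q = p then ?r p * cnj (?r p) else 0) else 0)"
    by (rule sum.cong) (use pq in \<open>simp_all add: beta_leg_def\<close>)
  also have "\<dots> = (if q = p \<and> p < k then complex_of_real (a ! k - a ! p) else 0)"
    using pq assms sqrt_mult_cnj_sqrt[of "a ! k - a ! p"] by (simp add: sum.delta sorted_nth_mono)
  also have "\<dots> = real_diag_mat (map (\<lambda>p. a ! k - a ! p) [0..<Suc k]) $$ (p,q)"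
  proof (cases "p = k")
    case False
    then have "p < k" using pq by simp
    then show ?thesis using pq by (simp add: nth_append)
  qed (use pq in \<open>simp add: nth_append\<close>)
  finally show "(beta_leg a k * cadj (beta_leg a k)) $$ (p,q)
      = real_diag_mat (map (\<lambda>p. a ! k - a ! p) [0..<Suc k]) $$ (p,q)" .
qed simp_all

lemma carrier_mat_zero_dim: "A \<in> carrier_mat m n \<Longrightarrow> m = 0 \<or> n = 0 \<Longrightarrow> A = 0\<^sub>m m n"
  by (rule eq_matI) auto

lemma moment_cong:
  "(\<And>\<alpha>. \<alpha> \<in> E \<Longrightarrow> f \<alpha> = f' \<alpha>) \<Longrightarrow> moment E s t nd f v = moment E s t nd f' v"
  unfolding moment_def by (intro eq_matI) simp_all

lemma leg_image_of_diag_image: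
  assumes E: "finite E" and a: "\<And>i. i \<in> V \<Longrightarrow> sorted (a i) \<and> length (a i) = d i"
    and img: "in_moment_image V E s t d (\<lambda>i. real_diag_mat (a i))"
  shows "in_moment_image (leg_vertices V d) (leg_arrows V E s t d) (leg_src s d) (leg_tgt t d) leg_dim
      (\<lambda>(i,k). complex_of_real (Theta (a i) (d i) k) \<cdot>\<^sub>m 1\<^sub>m k)"
proof -
  obtain f where f: "f \<in> rep_space E s t d" and mf: "\<And>i. i \<in> V \<Longrightarrow> moment E s t d f i = real_diag_mat (a i)"
    using img unfolding in_moment_image_def by blast
  have fa: "f \<alpha> \<in> carrier_mat (d (t \<alpha>)) (d (s \<alpha>))" if "\<alpha> \<in> E" for \<alpha>
    using f that unfolding rep_space_def by simp
  define g where "g x = (case x of Orig \<alpha> \<Rightarrow> f \<alpha> | Leg i k \<Rightarrow> beta_leg (a i) k)" for x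
  have g: "g \<in> rep_space (leg_arrows V E s t d) (leg_src s d) (leg_tgt t d) leg_dim"
    using fa by (auto simp: rep_space_def leg_arrows_def leg_dim_def g_def)
  have "orig_rep s t d g \<alpha> = f \<alpha>" if "\<alpha> \<in> E" for \<alpha>
    using carrier_mat_zero_dim[OF fa[OF that]] unfolding orig_rep_def g_def by auto
  then have "moment E s t d (orig_rep s t d g) i = moment E s t d f i" for i
    by (rule moment_cong)
  then have top: "moment E s t d (orig_rep s t d g) i = real_diag_mat (a i)" if "i \<in> V" for i
    using mf[OF that] by simp
  have "moment (leg_arrows V E s t d) (leg_src s d) (leg_tgt t d) leg_dim g (i,k)
      = complex_of_real (Theta (a i) (d i) k) \<cdot>\<^sub>m 1\<^sub>m k"
    if i: "i \<in> V" and k: "1 \<le> k" "k \<le> d i" for i k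
  proof -
    have sa: "sorted (a i)" "length (a i) = d i" using a[OF i] by simp_all
    have below: "(if 2 \<le> k then g (Leg i (k - 1)) * cadj (g (Leg i (k - 1))) else 0\<^sub>m k k)
        = real_diag_mat (map (\<lambda>p. a i ! (k - 1) - a i ! p) [0..<k])"
    proof (cases "2 \<le> k")
      case True
      then show ?thesis using beta_leg_mult_cadj[OF sa(1), of "k - 1"] sa(2) k by (simp add: g_def)
    next
      case False
      then have "k = 1" using k by simp
      then show ?thesis by (intro eq_matI) simp_all
    qed
    have above: "(if k < d i then cadj (g (Leg i k)) * g (Leg i k) else 0\<^sub>m k k)
        = (if k < d i then real_diag_mat (map (\<lambda>p. a i ! k - a i ! p) [0..<k]) else 0\<^sub>m k k)"
      using cadj_beta_leg_mult[OF sa(1), of k] sa(2) by (simp add: g_def)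
    let ?D = "\<lambda>j. real_diag_mat (map (\<lambda>p. a i ! j - a i ! p) [0..<k])"
    have D: "?D j \<in> carrier_mat k k" for j by simp
    show ?thesis
    proof (cases "k < d i")
      case True
      then show ?thesis
        unfolding moment_leg_quiver[OF E i k g] below above
        using D by (intro eq_matI) (simp_all add: Theta_def)
    next
      case False
      then have kd: "k = d i" using k by simp
      then show ?thesis
        unfolding moment_leg_quiver[OF E i k g] below above top[OF i]
        using D sa(2) by (intro eq_matI) (simp_all add: Theta_def)
    qed
  qed
  then show ?thesis
    unfolding in_moment_image_def leg_vertices_def by (intro bexI[OF _ g]) auto
qed

section \<open>Restricting to the original quiver\<close>

lemma orig_rep_in_rep_space:
  assumes "g \<in> rep_space (leg_arrows V E s t d) (leg_src s d) (leg_tgt t d) leg_dim"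
  shows "orig_rep s t d g \<in> rep_space E s t d"
  using leg_rep_carrier(1)[OF assms] unfolding rep_space_def orig_rep_def by simp

lemma leg_balance:
  assumes E: "finite E" and i: "i \<in> V" and k: "1 \<le> k" "k < d i"
    and g: "g \<in> rep_space (leg_arrows V E s t d) (leg_src s d) (leg_tgt t d) leg_dim"
    and mg: "moment (leg_arrows V E s t d) (leg_src s d) (leg_tgt t d) leg_dim g (i,k)
      = complex_of_real (Theta a (d i) k) \<cdot>\<^sub>m 1\<^sub>m k"
  shows "(if 2 \<le> k then g (Leg i (k - 1)) * cadj (g (Leg i (k - 1))) else 0\<^sub>m k k)
      - cadj (g (Leg i k)) * g (Leg i k) = complex_of_real (a ! (k - 1) - a ! k) \<cdot>\<^sub>m 1\<^sub>m k"
proof -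
  note leg = leg_rep_carrier(2)[OF g i]
  have "g (Leg i (k - 1)) \<in> carrier_mat k (k - 1)" if "2 \<le> k"
    using leg[of "k - 1"] k that by simp
  then have "(if 2 \<le> k then g (Leg i (k - 1)) * cadj (g (Leg i (k - 1))) else 0\<^sub>m k k) \<in> carrier_mat k k"
    by (auto intro!: mult_carrier_mat)
  then show ?thesis
    using moment_leg_quiver[OF E i k(1) _ g] mg k leg[OF k]
    by (auto intro!: eq_matI simp: Theta_def)
qed

lemma moment_orig_rep_top:
  assumes E: "finite E" and i: "i \<in> V" and n: "1 \<le> d i"
    and g: "g \<in> rep_space (leg_arrows V E s t d) (leg_src s d) (leg_tgt t d) leg_dim"
    and mg: "moment (leg_arrows V E s t d) (leg_src s d) (leg_tgt t d) leg_dim g (i, d i)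
      = complex_of_real (Theta a (d i) (d i)) \<cdot>\<^sub>m 1\<^sub>m (d i)"
  shows "moment E s t d (orig_rep s t d g) i
    = (- 1) \<cdot>\<^sub>m (if 2 \<le> d i then g (Leg i (d i - 1)) * cadj (g (Leg i (d i - 1))) else 0\<^sub>m (d i) (d i))
      + complex_of_real (a ! (d i - 1)) \<cdot>\<^sub>m 1\<^sub>m (d i)"
proof -
  have "g (Leg i (d i - 1)) \<in> carrier_mat (d i) (d i - 1)" if "2 \<le> d i"
    using leg_rep_carrier(2)[OF g i, of "d i - 1"] that by simp
  then have "(if 2 \<le> d i then g (Leg i (d i - 1)) * cadj (g (Leg i (d i - 1))) else 0\<^sub>m (d i) (d i))
      \<in> carrier_mat (d i) (d i)"
    by (auto intro!: mult_carrier_mat)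
  then show ?thesis
    using moment_leg_quiver[OF E i n order.refl g] mg
    by (auto intro!: eq_matI simp: Theta_def algebra_simps)
qed

lemma eq_add_scalar_of_minus_eq:
  fixes P Q :: "'a :: comm_ring_1 mat"
  assumes "P \<in> carrier_mat n n" "Q \<in> carrier_mat n n" "P - Q = c \<cdot>\<^sub>m 1\<^sub>m n"
  shows "Q = P + (- c) \<cdot>\<^sub>m 1\<^sub>m n"
proof (rule eq_matI)
  fix i j assume "i < dim_row (P + (- c) \<cdot>\<^sub>m 1\<^sub>m n)" "j < dim_col (P + (- c) \<cdot>\<^sub>m 1\<^sub>m n)"
  then have ij: "i < n" "j < n" using assms(1) by simp_all
  have "(P - Q) $$ (i,j) = (c \<cdot>\<^sub>m 1\<^sub>m n) $$ (i,j)" using assms(3) by simp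
  then show "Q $$ (i,j) = (P + (- c) \<cdot>\<^sub>m 1\<^sub>m n) $$ (i,j)"
    using ij assms(1,2) by (auto simp: algebra_simps)
qed (use assms in simp_all)

text \<open>There is no leg \<open>\<beta>\<^sub>0\<close>; it is read as the map \<open>\<complex>\<^sup>0 \<rightarrow> \<complex>\<^sup>1\<close>, so that \<open>\<beta>\<^sub>0\<beta>\<^sub>0\<^sup>* = 0\<close>.\<close>

lemma leg_chain_unitarily_similar:
  fixes \<beta> :: "nat \<Rightarrow> complex mat" and a :: "real list"
  assumes carrier: "\<And>k. 1 \<le> k \<Longrightarrow> k < n \<Longrightarrow> \<beta> k \<in> carrier_mat (Suc k) k"
    and balance: "\<And>k. 1 \<le> k \<Longrightarrow> k < n \<Longrightarrow>
      (if 2 \<le> k then \<beta> (k - 1) * cadj (\<beta> (k - 1)) else 0\<^sub>m k k) - cadj (\<beta> k) * \<beta> k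
        = complex_of_real (a ! (k - 1) - a ! k) \<cdot>\<^sub>m 1\<^sub>m k"
    and k: "k < n"
  shows "unitarily_similar (if k = 0 then 0\<^sub>m 1 1 else \<beta> k * cadj (\<beta> k))
      (real_diag_mat (map (\<lambda>j. a ! k - a ! j) [0..<Suc k]))"
  using k
proof (induction k)
  case 0
  have "0\<^sub>m 1 1 = real_diag_mat (map (\<lambda>j. a ! 0 - a ! j) [0..<1])"
    by (rule eq_matI) simp_all
  then show ?case using unitarily_similar_refl[of "0\<^sub>m 1 1" 1] by simp
next
  case (Suc k)
  let ?es = "map (\<lambda>j. a ! k - a ! j) [0..<Suc k]"
  let ?prev = "if k = 0 then 0\<^sub>m 1 1 else \<beta> k * cadj (\<beta> k)"
  define c where "c = a ! Suc k - a ! k"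
  have b: "\<beta> (Suc k) \<in> carrier_mat (Suc (Suc k)) (Suc k)" using carrier Suc.prems by simp
  have prev: "?prev \<in> carrier_mat (Suc k) (Suc k)"
    using carrier[of k] Suc.prems by (auto intro: mult_carrier_mat)
  have "?prev - cadj (\<beta> (Suc k)) * \<beta> (Suc k) = (- complex_of_real c) \<cdot>\<^sub>m 1\<^sub>m (Suc k)"
    using balance[of "Suc k"] Suc.prems unfolding c_def by (cases "k = 0") simp_all
  then have "cadj (\<beta> (Suc k)) * \<beta> (Suc k) = ?prev + complex_of_real c \<cdot>\<^sub>m 1\<^sub>m (Suc k)"
    using eq_add_scalar_of_minus_eq[OF prev mult_carrier_mat[OF cadj_carrier_mat[OF b] b]] by simp
  moreover have "unitarily_similar (?prev + complex_of_real c \<cdot>\<^sub>m 1\<^sub>m (Suc k))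
      (real_diag_mat ?es + complex_of_real c \<cdot>\<^sub>m 1\<^sub>m (Suc k))"
    using Suc.prems by (intro unitarily_similar_add_scalar[OF Suc.IH prev]) simp
  moreover have "real_diag_mat ?es + complex_of_real c \<cdot>\<^sub>m 1\<^sub>m (Suc k)
      = real_diag_mat (map (\<lambda>j. a ! Suc k - a ! j) [0..<Suc k])"
  proof -
    have "length ?es = Suc k" by simp
    then have "real_diag_mat ?es + complex_of_real c \<cdot>\<^sub>m 1\<^sub>m (Suc k) = real_diag_mat (map (\<lambda>x. x + c) ?es)"
      by (rule real_diag_mat_add_scalar)
    also have "map (\<lambda>x. x + c) ?es = map (\<lambda>j. a ! Suc k - a ! j) [0..<Suc k]"
      unfolding c_def by (simp del: upt_Suc)
    finally show ?thesis .
  qed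
  ultimately have "unitarily_similar (cadj (\<beta> (Suc k)) * \<beta> (Suc k))
      (real_diag_mat (map (\<lambda>j. a ! Suc k - a ! j) [0..<Suc k]))"
    by simp
  from unitarily_similar_mult_cadj[OF b this] show ?case by simp
qed

lemma unitarily_similar_moment_orig_rep:
  assumes E: "finite E" and i: "i \<in> V" and la: "length a = d i"
    and g: "g \<in> rep_space (leg_arrows V E s t d) (leg_src s d) (leg_tgt t d) leg_dim"
    and mg: "\<And>k. 1 \<le> k \<Longrightarrow> k \<le> d i \<Longrightarrow>
      moment (leg_arrows V E s t d) (leg_src s d) (leg_tgt t d) leg_dim g (i,k)
        = complex_of_real (Theta a (d i) k) \<cdot>\<^sub>m 1\<^sub>m k"
  shows "unitarily_similar (moment E s t d (orig_rep s t d g) i) (real_diag_mat a)"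
proof (cases "d i = 0")
  case True
  then have "moment E s t d (orig_rep s t d g) i = real_diag_mat a"
    using la by (intro eq_matI) simp_all
  then show ?thesis using unitarily_similar_refl[of "real_diag_mat a" 0] la True by simp
next
  case False
  define n where "n = d i"
  define \<beta> where "\<beta> k = g (Leg i k)" for k
  let ?X = "if 2 \<le> n then \<beta> (n - 1) * cadj (\<beta> (n - 1)) else 0\<^sub>m n n"
  let ?c = "a ! (n - 1)"
  let ?es = "map (\<lambda>j. ?c - a ! j) [0..<n]"
  have carrier: "\<beta> k \<in> carrier_mat (Suc k) k" if "1 \<le> k" "k < n" for k
    using leg_rep_carrier(2)[OF g i] that unfolding \<beta>_def n_def by simp
  have "\<beta> (n - 1) \<in> carrier_mat n (n - 1)" if "2 \<le> n"
    using carrier[of "n - 1"] that by simp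
  then have X: "?X \<in> carrier_mat n n" by (auto intro!: mult_carrier_mat)
  have n: "n - 1 < n" "Suc (n - 1) = n" using False unfolding n_def by simp_all
  have X0: "?X = (if n - 1 = 0 then 0\<^sub>m 1 1 else \<beta> (n - 1) * cadj (\<beta> (n - 1)))"
    using False unfolding n_def by (cases "d i = 1") simp_all
  have "(if 2 \<le> k then \<beta> (k - 1) * cadj (\<beta> (k - 1)) else 0\<^sub>m k k) - cadj (\<beta> k) * \<beta> k
      = complex_of_real (a ! (k - 1) - a ! k) \<cdot>\<^sub>m 1\<^sub>m k" if "1 \<le> k" "k < n" for k
    using leg_balance[OF E i that[unfolded n_def] g mg] that unfolding \<beta>_def n_def by simp
  from leg_chain_unitarily_similar[OF carrier this n(1)]
  have "unitarily_similar ?X (real_diag_mat ?es)" unfolding X0[symmetric] n(2) .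
  then have "unitarily_similar ((- 1) \<cdot>\<^sub>m ?X + complex_of_real ?c \<cdot>\<^sub>m 1\<^sub>m n)
      ((- 1) \<cdot>\<^sub>m real_diag_mat ?es + complex_of_real ?c \<cdot>\<^sub>m 1\<^sub>m n)"
    using X by (intro unitarily_similar_add_scalar unitarily_similar_smult) auto
  moreover have "(- 1) \<cdot>\<^sub>m real_diag_mat ?es + complex_of_real ?c \<cdot>\<^sub>m 1\<^sub>m n = real_diag_mat a"
    using la unfolding n_def by (intro eq_matI) simp_all
  moreover have "moment E s t d (orig_rep s t d g) i = (- 1) \<cdot>\<^sub>m ?X + complex_of_real ?c \<cdot>\<^sub>m 1\<^sub>m n"
    using moment_orig_rep_top[OF E i _ g mg] False unfolding \<beta>_def n_def by simp
  ultimately show ?thesis by simp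
qed

lemma diag_image_of_leg_image:
  assumes E: "finite E" and la: "\<And>i. i \<in> V \<Longrightarrow> length (a i) = d i"
    and img: "in_moment_image (leg_vertices V d) (leg_arrows V E s t d) (leg_src s d) (leg_tgt t d) leg_dim
      (\<lambda>(i,k). complex_of_real (Theta (a i) (d i) k) \<cdot>\<^sub>m 1\<^sub>m k)"
  shows "in_moment_image V E s t d (\<lambda>i. real_diag_mat (a i))"
proof -
  obtain g where g: "g \<in> rep_space (leg_arrows V E s t d) (leg_src s d) (leg_tgt t d) leg_dim"
    and mg: "\<forall>v\<in>leg_vertices V d. moment (leg_arrows V E s t d) (leg_src s d) (leg_tgt t d) leg_dim g v
      = (case v of (i,k) \<Rightarrow> complex_of_real (Theta (a i) (d i) k) \<cdot>\<^sub>m 1\<^sub>m k)"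
    using img unfolding in_moment_image_def by blast
  have "unitarily_similar (moment E s t d (orig_rep s t d g) i) (real_diag_mat (a i))" if "i \<in> V" for i
    using mg that by (intro unitarily_similar_moment_orig_rep[OF E that la[OF that] g])
      (auto simp: leg_vertices_def)
  moreover have "in_moment_image V E s t d (\<lambda>i. moment E s t d (orig_rep s t d g) i)"
    unfolding in_moment_image_def using orig_rep_in_rep_space[OF g] by blast
  ultimately show ?thesis
    using in_moment_image_unitarily_similar[OF E] unitarily_similar_sym by metis
qed

theorem proposition4p2:
  fixes V :: "'v set" and E :: "'e set" and s t :: "'e \<Rightarrow> 'v"
    and d :: "'v \<Rightarrow> nat" and B :: "'v \<Rightarrow> complex mat" and a :: "'v \<Rightarrow> real list"
  assumes "finite V" and "finite E"
    and "\<forall>\<alpha>\<in>E. s \<alpha> \<in> V \<and> t \<alpha> \<in> V"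
    and "\<forall>i\<in>V. herm (d i) (B i)"
    and "\<forall>i\<in>V. sorted_eigenvalues (B i) (a i)"
  shows "in_moment_image V E s t d B \<longleftrightarrow>
    in_moment_image (leg_vertices V d) (leg_arrows V E s t d) (leg_src s d) (leg_tgt t d) leg_dim
      (\<lambda>(i,k). complex_of_real (Theta (a i) (d i) k) \<cdot>\<^sub>m 1\<^sub>m k)"
proof -
  note E = assms(2)
  have eigen: "sorted (a i) \<and> length (a i) = d i" if "i \<in> V" for i
    using assms(4,5) that unfolding herm_def sorted_eigenvalues_def by auto
  have sim: "unitarily_similar (B i) (real_diag_mat (a i))" if "i \<in> V" for i
    using assms(4,5) that unfolding sorted_eigenvalues_def
    by (intro hermitian_unitarily_similar_real_diag_mat) auto
  show ?thesis
  proof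
    assume "in_moment_image V E s t d B"
    then have "in_moment_image V E s t d (\<lambda>i. real_diag_mat (a i))"
      by (rule in_moment_image_unitarily_similar[OF E]) (rule unitarily_similar_sym[OF sim])
    then show "in_moment_image (leg_vertices V d) (leg_arrows V E s t d) (leg_src s d) (leg_tgt t d)
        leg_dim (\<lambda>(i,k). complex_of_real (Theta (a i) (d i) k) \<cdot>\<^sub>m 1\<^sub>m k)"
      using eigen by (intro leg_image_of_diag_image[OF E]) auto
  next
    assume "in_moment_image (leg_vertices V d) (leg_arrows V E s t d) (leg_src s d) (leg_tgt t d)
        leg_dim (\<lambda>(i,k). complex_of_real (Theta (a i) (d i) k) \<cdot>\<^sub>m 1\<^sub>m k)"
    then have "in_moment_image V E s t d (\<lambda>i. real_diag_mat (a i))"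
      using eigen by (intro diag_image_of_leg_image[OF E]) auto
    then show "in_moment_image V E s t d B"
      by (rule in_moment_image_unitarily_similar[OF E]) (rule sim)
  qed
qed

end
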